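(* Let $X\times G\to X$ be a continuous right action of a locally compact Hausdorff group on a Hausdorff space, and let $F\subseteq X$ be a closed subset such that the action is $F$-proper. Then $FG\subseteq X$ is closed.
   Context: For $A,B\subseteq X$ set $\langle A:B\rangle:=\{g\in G: Bg\cap A\neq\emptyset\}$ and write $A\perp B$ if it is relatively compact in $G$. For closed $F$, the action is $F$-proper if for every $x\in X$ there are neighborhoods $V_x\ni x$ and $V_F\supseteq F$ with $V_F\perp V_x$. *)

theory Defs
  imports "HOL-Analysis.Analysis"
begin

text \<open>A (not necessarily abelian) topological group is modelled by the type class
  topological_group_add (group_add with continuous addition and inversion), written additively.\<close>

definition right_action :: "('x \<Rightarrow> 'g::group_add \<Rightarrow> 'x) \<Rightarrow> bool" where
  "right_action act \<longleftrightarrow> (\<forall>x. act x 0 = x) \<and> (\<forall>x g h. act (act x g) h = act x (g + h))"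

definition transporter :: "('x \<Rightarrow> 'g \<Rightarrow> 'x) \<Rightarrow> 'x set \<Rightarrow> 'x set \<Rightarrow> 'g set" where
  "transporter act A B = {g. (\<lambda>b. act b g) ` B \<inter> A \<noteq> {}}"

definition perp :: "('x \<Rightarrow> 'g::topological_space \<Rightarrow> 'x) \<Rightarrow> 'x set \<Rightarrow> 'x set \<Rightarrow> bool" where
  "perp act A B \<longleftrightarrow> compact (closure (transporter act A B))"

definition F_proper :: "('x::topological_space \<Rightarrow> 'g::topological_space \<Rightarrow> 'x) \<Rightarrow> 'x set \<Rightarrow> bool" where
  "F_proper act F \<longleftrightarrow> (\<forall>x. \<exists>Vx VF. x \<in> interior Vx \<and> F \<subseteq> interior VF \<and> perp act VF Vx)"

end

theory Submission
  imports Defs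
begin

text \<open>Near any point \<open>y\<close>, properness provides a neighbourhood \<open>Vx\<close> and a compact set
  \<open>K = closure \<langle>VF:Vx\<rangle>\<close> such that every point of \<open>Vx\<close> that is moved into \<open>F\<close> by some group
  element is already moved into \<open>F\<close> by an element of \<open>K\<close>. The set of points moved into \<open>F\<close> by
  an element of \<open>K\<close> is closed, being the projection along the compact factor \<open>K\<close> of the closed
  preimage of \<open>F\<close> under the action, and it lies inside \<open>FG\<close>. Hence \<open>FG\<close> contains every point
  of its closure.\<close>

lemma closed_fst_projection_compact:
  fixes W :: "('a::topological_space \<times> 'b::topological_space) set"
  assumes "compact K" and "closed W"
  shows "closed {z. \<exists>h\<in>K. (z, h) \<in> W}"
  unfolding closed_def
proof (subst open_subopen, intro ballI)
  fix z assume "z \<in> - {z. \<exists>h\<in>K. (z, h) \<in> W}"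
  then have "{z} \<times> K \<subseteq> - W" by auto
  from Elementary_Topology.tube_lemma[OF \<open>compact K\<close> _ this] \<open>closed W\<close>
  obtain U where "z \<in> U" "open U" "U \<times> K \<subseteq> - W"
    by (auto simp: closed_def)
  then show "\<exists>T. open T \<and> z \<in> T \<and> T \<subseteq> - {z. \<exists>h\<in>K. (z, h) \<in> W}"
    by (intro exI[of _ U]) auto
qed

lemma closed_if_locally_sandwiched:
  assumes "\<And>y. y \<in> closure S \<Longrightarrow> \<exists>U C. open U \<and> y \<in> U \<and> closed C \<and> U \<inter> S \<subseteq> C \<and> C \<subseteq> S"
  shows "closed S"
proof -
  have "closure S \<subseteq> S"
  proof
    fix y assume "y \<in> closure S"
    from assms[OF this] obtain U C
      where "open U" "y \<in> U" "closed C" "U \<inter> S \<subseteq> C" "C \<subseteq> S"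
      by blast
    have "y \<in> closure (U \<inter> S)"
      using open_Int_closure_subset[OF \<open>open U\<close>] \<open>y \<in> U\<close> \<open>y \<in> closure S\<close> by blast
    also have "\<dots> \<subseteq> C"
      using \<open>U \<inter> S \<subseteq> C\<close> \<open>closed C\<close> by (rule closure_minimal)
    finally show "y \<in> S"
      using \<open>C \<subseteq> S\<close> by blast
  qed
  then show ?thesis
    by (simp only: closure_subset_eq)
qed

lemma right_action_saturation_eq:
  assumes "right_action act"
  shows "{act f g | f g. f \<in> F} = {z. \<exists>h. act z h \<in> F}"
proof -
  have act_0: "act x 0 = x" and act_add: "act (act x g) h = act x (g + h)" for x g h
    using assms unfolding right_action_def by auto
  show ?thesis
  proof safe
    fix f g assume "f \<in> F"
    then show "\<exists>h. act (act f g) h \<in> F"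
      by (intro exI[of _ "- g"]) (simp add: act_add act_0)
  next
    fix z h assume "act z h \<in> F"
    then show "\<exists>f g. z = act f g \<and> f \<in> F"
      by (intro exI[of _ "act z h"] exI[of _ "- h"]) (simp add: act_add act_0)
  qed
qed

lemma closed_moved_into_by_compact:
  assumes "continuous_on UNIV (\<lambda>(x, g). act x g)" and "closed F" and "compact K"
  shows "closed {z. \<exists>h\<in>K. act z h \<in> F}"
proof -
  have "closed ((\<lambda>(x, g). act x g) -` F)"
    using closed_vimage[OF assms(2,1)] .
  from closed_fst_projection_compact[OF \<open>compact K\<close> this] show ?thesis
    by simp
qed

lemma moved_into_by_transporter:
  assumes "F \<subseteq> VF" and "U \<subseteq> Vx"
  shows "U \<inter> {z. \<exists>h. act z h \<in> F} \<subseteq> {z. \<exists>h\<in>transporter act VF Vx. act z h \<in> F}"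
  using assms unfolding transporter_def by fastforce

theorem corollary2p11:
  fixes act :: "'x::t2_space \<Rightarrow> 'g::{topological_group_add, t2_space} \<Rightarrow> 'x"
    and F :: "'x set"
  assumes "locally_compact_space (euclidean :: 'g topology)"
    and "right_action act"
    and "continuous_on UNIV (\<lambda>(x, g). act x g)"
    and "closed F"
    and "F_proper act F"
  shows "closed {act f g | f g. f \<in> F}"
  unfolding right_action_saturation_eq[OF assms(2)]
proof (rule closed_if_locally_sandwiched)
  fix y
  obtain Vx VF where "y \<in> interior Vx" "F \<subseteq> interior VF" "perp act VF Vx"
    using assms(5) unfolding F_proper_def by blast
  define K where "K = closure (transporter act VF Vx)"
  have "compact K"
    using \<open>perp act VF Vx\<close> unfolding perp_def K_def .
  have "interior Vx \<inter> {z. \<exists>h. act z h \<in> F} \<subseteq> {z. \<exists>h\<in>transporter act VF Vx. act z h \<in> F}"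
    using \<open>F \<subseteq> interior VF\<close> interior_subset
    by (intro moved_into_by_transporter) blast+
  also have "\<dots> \<subseteq> {z. \<exists>h\<in>K. act z h \<in> F}"
    unfolding K_def using closure_subset by blast
  finally have "interior Vx \<inter> {z. \<exists>h. act z h \<in> F} \<subseteq> {z. \<exists>h\<in>K. act z h \<in> F}" .
  moreover have "closed {z. \<exists>h\<in>K. act z h \<in> F}"
    using closed_moved_into_by_compact[OF assms(3,4) \<open>compact K\<close>] .
  ultimately show "\<exists>U C. open U \<and> y \<in> U \<and> closed C \<and>
      U \<inter> {z. \<exists>h. act z h \<in> F} \<subseteq> C \<and> C \<subseteq> {z. \<exists>h. act z h \<in> F}"
    using \<open>y \<in> interior Vx\<close>
    by (intro exI[of _ "interior Vx"] exI[of _ "{z. \<exists>h\<in>K. act z h \<in> F}"]) auto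
qed

end
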